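(* Let $R$ be a regular run. Then (1) the term SafeToOpen is discrete; (2) for every $t\ge0$, if SafeToOpen holds at $t+$ then it holds at $t$; (3) if SafeToOpen becomes true at a moment $t$, then TrackStatus$(x)$ becomes empty at $t$ for some track $x$.
   Context: Setting (evolving algebra for the railroad crossing). States are structures over a vocabulary containing: a finite universe Tracks; the reals and ExtendedReals $=\mathbb{R}\cup\{\infty\}$ with standard $<$ and $+$ ($\infty$ largest); a nullary real-valued symbol $\mathrm{CT}$ (current time); positive real constants $d_{close},d_{open},d_{min},d_{max}$ with $d_{close}<d_{min}\le d_{max}$; a unary function TrackStatus from Tracks to $\{\text{empty},\text{coming},\text{incrossing}\}$; a unary function Deadline from Tracks to ExtendedReals; a nullary Dir with values in $\{\text{open},\text{close}\}$; a nullary GateStatus with values in $\{\text{opened},\text{closed}\}$. Put $W=d_{min}-d_{close}$ and $\Delta_{close}=d_{close}+(d_{max}-d_{min})=d_{max}-W$. For a track $x$, $s(x)$ is the condition [$\mathrm{TrackStatus}(x)=\text{empty}$ or $\mathrm{CT}+d_{open}<\mathrm{Deadline}(x)$], and SafeToOpen is $\forall x\in\mathrm{Tracks}\ s(x)$. The program has two modules (agents). Gate: simultaneously OpenGate "if Dir=open then GateStatus:=opened" and CloseGate "if Dir=close then GateStatus:=closed". Controller: simultaneously, for every track $x$, SetDeadline$(x)$ "if TrackStatus$(x)$=coming and Deadline$(x)=\infty$ then Deadline$(x):=\mathrm{CT}+W$", SignalClose$(x)$ "if $\mathrm{CT}=$Deadline$(x)$ then Dir:=close", ClearDeadline$(x)$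 "if TrackStatus$(x)$=empty and Deadline$(x)<\infty$ then Deadline$(x):=\infty$", together with SignalOpen "if Dir=close and SafeToOpen then Dir:=open". Executing a module means computing all updates it generates in the current state and performing them simultaneously (nothing happens if the update set is inconsistent). A module is enabled at a state if its update set is consistent and contains an update that changes the state. TrackStatus is external (changed only by the environment); Deadline, Dir, GateStatus are internal (changed only by the modules); other symbols are static. Runs: for $t\mapsto R(t)$, $t\in[0,\infty)$, let $\rho(t)$ be the reduct of $R(t)$ without CT. $R$ is a pre-run if all $R(t)$ share a superuniverse, $\mathrm{CT}=t$ in $R(t)$, and for every $\tau>0$ there are $0=t_0<\dots<t_n=\tau$ with $\rho$ constant on each $(t_i,t_{i+1})$. For a term $e$ (free variables fixed), $e_t$ is its value in $R(t)$, $e_{t+}$ (resp. $e_{t-}$, $t>0$) its constant value on some $(t,t+\epsilon)$ (resp. $(t-\epsilon,t)$); likewise $\rho(t\pm)$. $e$ holds over an interval if it holds at each point; $e$ becomes (is set to) $a$ at $t$ if $e_{t-}\ne a=e_t$ or $e_t\neq a=e_{t+}$. A moment $t$ is significant for $e$ if every neighbourhood of $t$ contains a moment $a$ with $e_a\ne e_t$; $e$ is discrete if its set of significant moments has no limit point in $[0,\infty)$. A pre-run is a run if (i) whenever $\rho(t+)\neq\rho(t)$, $\rho(t+)$ is the CT-free reduct of the result of executing some modules at $R(t)$ (these agents fire at $t$), with external functions equal in $\rho(t)$ and $\rho(t+)$; (ii) whenever $t>0$ and $\rho(t)\ne\rho(t-)$, they differ only in external functions. An agent is immediate if it fires at every moment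 it is enabled; bounded if immediate or there is $b>0$ with no interval $(t,t+b)$ over which it is enabled but never fires. Initial states: TrackStatus$(x)$=empty and Deadline$(x)=\infty$ for every track $x$. A regular run is a run $R$ with $R(0)$ initial such that: (Train Motion) for each track $x$ there is a finite or infinite sequence $0=t_0<t_1<t_2<\cdots$ (the significant moments of $x$) with TrackStatus$(x)$=empty over each $[t_{3i},t_{3i+1})$, =coming over each $[t_{3i+1},t_{3i+2})$ where $d_{min}\le t_{3i+2}-t_{3i+1}\le d_{max}$, =incrossing over each $[t_{3i+2},t_{3i+3})$, and, if the sequence is finite with last element $t_k$, then $3\mid k$ and TrackStatus$(x)$=empty over $[t_k,\infty)$; (Controller Timing) Controller is immediate; (Gate Timing) Gate is bounded, there is no interval $(t,t+d_{close})$ over which Dir=close and GateStatus=opened both hold, and no interval $(t,t+d_{open})$ over which Dir=open and GateStatus=closed both hold. *)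

theory Defs
  imports Complex_Main "HOL-Library.Extended_Real"
begin

datatype tstat = Empty | Coming | Incrossing
datatype dirv = DOpen | DClose
datatype gstat = Opened | Closed

text \<open>CT-free part of a state (the reduct rho). The universe Tracks is the type 'tr;
  CT is the time argument t itself; the static constants are parameters.\<close>
record 'tr rstate =
  TrackStatus :: "'tr \<Rightarrow> tstat"
  Deadline :: "'tr \<Rightarrow> ereal"
  Dir :: dirv
  GateStatus :: gstat

datatype 'tr upd = UDeadline 'tr ereal | UDir dirv | UGate gstat

datatype agent = Gate | Controller

definition consistent :: "'tr upd set \<Rightarrow> bool" where
  "consistent U \<longleftrightarrow>
     (\<forall>x a b. UDeadline x a \<in> U \<and> UDeadline x b \<in> U \<longrightarrow> a = b) \<and>
     (\<forall>a b. UDir a \<in> U \<and> UDir b \<in> U \<longrightarrow> a = b) \<and>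
     (\<forall>a b. UGate a \<in> U \<and> UGate b \<in> U \<longrightarrow> a = b)"

definition apply_upd :: "'tr upd set \<Rightarrow> 'tr rstate \<Rightarrow> 'tr rstate" where
  "apply_upd U \<sigma> = \<sigma>\<lparr>
     Deadline := (\<lambda>x. if \<exists>v. UDeadline x v \<in> U then (SOME v. UDeadline x v \<in> U) else Deadline \<sigma> x),
     Dir := (if \<exists>v. UDir v \<in> U then (SOME v. UDir v \<in> U) else Dir \<sigma>),
     GateStatus := (if \<exists>v. UGate v \<in> U then (SOME v. UGate v \<in> U) else GateStatus \<sigma>)\<rparr>"

definition changes :: "'tr upd \<Rightarrow> 'tr rstate \<Rightarrow> bool" where
  "changes u \<sigma> = (case u of
      UDeadline x v \<Rightarrow> Deadline \<sigma> x \<noteq> v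
    | UDir v \<Rightarrow> Dir \<sigma> \<noteq> v
    | UGate v \<Rightarrow> GateStatus \<sigma> \<noteq> v)"

definition safe_to_open :: "real \<Rightarrow> 'tr rstate \<Rightarrow> real \<Rightarrow> bool" where
  "safe_to_open dopen \<sigma> t \<longleftrightarrow>
     (\<forall>x. TrackStatus \<sigma> x = Empty \<or> ereal (t + dopen) < Deadline \<sigma> x)"

definition gate_updates :: "'tr rstate \<Rightarrow> 'tr upd set" where
  "gate_updates \<sigma> =
     (if Dir \<sigma> = DOpen then {UGate Opened} else {}) \<union>
     (if Dir \<sigma> = DClose then {UGate Closed} else {})"

definition controller_updates ::
    "real \<Rightarrow> real \<Rightarrow> real \<Rightarrow> 'tr rstate \<Rightarrow> real \<Rightarrow> 'tr upd set" where
  "controller_updates dclose dopen dmin \<sigma> t =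
     {UDeadline x (ereal (t + (dmin - dclose))) | x.
        TrackStatus \<sigma> x = Coming \<and> Deadline \<sigma> x = \<infinity>}
   \<union> {UDir DClose | x. ereal t = Deadline \<sigma> x}
   \<union> {UDeadline x \<infinity> | x. TrackStatus \<sigma> x = Empty \<and> Deadline \<sigma> x < \<infinity>}
   \<union> (if Dir \<sigma> = DClose \<and> safe_to_open dopen \<sigma> t then {UDir DOpen} else {})"

definition module_updates ::
    "real \<Rightarrow> real \<Rightarrow> real \<Rightarrow> agent \<Rightarrow> 'tr rstate \<Rightarrow> real \<Rightarrow> 'tr upd set" where
  "module_updates dclose dopen dmin A \<sigma> t = (case A of
      Gate \<Rightarrow> gate_updates \<sigma>
    | Controller \<Rightarrow> controller_updates dclose dopen dmin \<sigma> t)"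

definition exec_agents ::
    "real \<Rightarrow> real \<Rightarrow> real \<Rightarrow> agent set \<Rightarrow> 'tr rstate \<Rightarrow> real \<Rightarrow> 'tr rstate" where
  "exec_agents dclose dopen dmin M \<sigma> t =
     apply_upd (\<Union>A\<in>M. if consistent (module_updates dclose dopen dmin A \<sigma> t)
                       then module_updates dclose dopen dmin A \<sigma> t else {}) \<sigma>"

definition enabled ::
    "real \<Rightarrow> real \<Rightarrow> real \<Rightarrow> agent \<Rightarrow> 'tr rstate \<Rightarrow> real \<Rightarrow> bool" where
  "enabled dclose dopen dmin A \<sigma> t \<longleftrightarrow>
     consistent (module_updates dclose dopen dmin A \<sigma> t) \<and>
     (\<exists>u\<in>module_updates dclose dopen dmin A \<sigma> t. changes u \<sigma>)"

definition pre_run :: "(real \<Rightarrow> 'tr rstate) \<Rightarrow> bool" where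
  "pre_run R \<longleftrightarrow> (\<forall>\<tau>>0. \<exists>ts. ts \<noteq> [] \<and> sorted_wrt (<) ts \<and> hd ts = 0 \<and> last ts = \<tau> \<and>
      (\<forall>i. Suc i < length ts \<longrightarrow> (\<exists>\<sigma>. \<forall>s. ts ! i < s \<and> s < ts ! Suc i \<longrightarrow> R s = \<sigma>)))"

definition fires ::
    "real \<Rightarrow> real \<Rightarrow> real \<Rightarrow> (real \<Rightarrow> 'tr rstate) \<Rightarrow> agent \<Rightarrow> real \<Rightarrow> bool" where
  "fires dclose dopen dmin R A t \<longleftrightarrow>
     (\<exists>\<sigma>. eventually (\<lambda>s. R s = \<sigma>) (at_right t) \<and> \<sigma> \<noteq> R t \<and>
        (\<exists>M. A \<in> M \<and> \<sigma> = exec_agents dclose dopen dmin M (R t) t))"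

definition is_run :: "real \<Rightarrow> real \<Rightarrow> real \<Rightarrow> (real \<Rightarrow> 'tr rstate) \<Rightarrow> bool" where
  "is_run dclose dopen dmin R \<longleftrightarrow> pre_run R \<and>
     (\<forall>t\<ge>0. \<forall>\<sigma>. eventually (\<lambda>s. R s = \<sigma>) (at_right t) \<and> \<sigma> \<noteq> R t \<longrightarrow>
        (\<exists>M. \<sigma> = exec_agents dclose dopen dmin M (R t) t \<and>
             TrackStatus \<sigma> = TrackStatus (R t))) \<and>
     (\<forall>t>0. \<forall>\<sigma>. eventually (\<lambda>s. R s = \<sigma>) (at_left t) \<longrightarrow>
        Deadline \<sigma> = Deadline (R t) \<and> Dir \<sigma> = Dir (R t) \<and> GateStatus \<sigma> = GateStatus (R t))"

definition immediate ::
    "real \<Rightarrow> real \<Rightarrow> real \<Rightarrow> (real \<Rightarrow> 'tr rstate) \<Rightarrow> agent \<Rightarrow> bool" where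
  "immediate dclose dopen dmin R A \<longleftrightarrow>
     (\<forall>t\<ge>0. enabled dclose dopen dmin A (R t) t \<longrightarrow> fires dclose dopen dmin R A t)"

definition bounded_agent ::
    "real \<Rightarrow> real \<Rightarrow> real \<Rightarrow> (real \<Rightarrow> 'tr rstate) \<Rightarrow> agent \<Rightarrow> bool" where
  "bounded_agent dclose dopen dmin R A \<longleftrightarrow> immediate dclose dopen dmin R A \<or>
     (\<exists>b>0. \<forall>t\<ge>0. \<not> ((\<forall>s\<in>{t<..<t+b}. enabled dclose dopen dmin A (R s) s) \<and>
                     (\<forall>s\<in>{t<..<t+b}. \<not> fires dclose dopen dmin R A s)))"

definition initial_state :: "'tr rstate \<Rightarrow> bool" where
  "initial_state \<sigma> \<longleftrightarrow> (\<forall>x. TrackStatus \<sigma> x = Empty \<and> Deadline \<sigma> x = \<infinity>)"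

definition motion_block :: "real \<Rightarrow> real \<Rightarrow> (real \<Rightarrow> tstat) \<Rightarrow> (nat \<Rightarrow> real) \<Rightarrow> nat \<Rightarrow> bool" where
  "motion_block dmin dmax f ts i \<longleftrightarrow>
     (\<forall>s. ts (3*i) \<le> s \<and> s < ts (3*i+1) \<longrightarrow> f s = Empty) \<and>
     (\<forall>s. ts (3*i+1) \<le> s \<and> s < ts (3*i+2) \<longrightarrow> f s = Coming) \<and>
     dmin \<le> ts (3*i+2) - ts (3*i+1) \<and> ts (3*i+2) - ts (3*i+1) \<le> dmax \<and>
     (\<forall>s. ts (3*i+2) \<le> s \<and> s < ts (3*i+3) \<longrightarrow> f s = Incrossing)"

definition train_motion :: "real \<Rightarrow> real \<Rightarrow> (real \<Rightarrow> tstat) \<Rightarrow> bool" where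
  "train_motion dmin dmax f \<longleftrightarrow>
     (\<exists>ts. ts 0 = 0 \<and> strict_mono ts \<and> (\<forall>i. motion_block dmin dmax f ts i)) \<or>
     (\<exists>ts k. ts 0 = 0 \<and> (\<forall>i<k. ts i < ts (Suc i)) \<and> 3 dvd k \<and>
        (\<forall>i. 3*i+3 \<le> k \<longrightarrow> motion_block dmin dmax f ts i) \<and>
        (\<forall>s\<ge>ts k. f s = Empty))"

definition regular_run ::
    "real \<Rightarrow> real \<Rightarrow> real \<Rightarrow> real \<Rightarrow> (real \<Rightarrow> 'tr rstate) \<Rightarrow> bool" where
  "regular_run dclose dopen dmin dmax R \<longleftrightarrow>
     is_run dclose dopen dmin R \<and> initial_state (R 0) \<and>
     (\<forall>x. train_motion dmin dmax (\<lambda>s. TrackStatus (R s) x)) \<and>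
     immediate dclose dopen dmin R Controller \<and>
     bounded_agent dclose dopen dmin R Gate \<and>
     (\<forall>t\<ge>0. \<not> (\<forall>s\<in>{t<..<t+dclose}. Dir (R s) = DClose \<and> GateStatus (R s) = Opened)) \<and>
     (\<forall>t\<ge>0. \<not> (\<forall>s\<in>{t<..<t+dopen}. Dir (R s) = DOpen \<and> GateStatus (R s) = Closed))"

definition significant :: "(real \<Rightarrow> 'a) \<Rightarrow> real \<Rightarrow> bool" where
  "significant f t \<longleftrightarrow> (\<forall>\<epsilon>>0. \<exists>a\<ge>0. \<bar>a - t\<bar> < \<epsilon> \<and> f a \<noteq> f t)"

definition discrete_term :: "(real \<Rightarrow> 'a) \<Rightarrow> bool" where
  "discrete_term f \<longleftrightarrow>
     (\<forall>l\<ge>0. \<exists>\<epsilon>>0. \<forall>s. s \<ge> 0 \<and> significant f s \<and> \<bar>s - l\<bar> < \<epsilon> \<longrightarrow> s = l)"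

definition becomes :: "(real \<Rightarrow> 'a) \<Rightarrow> 'a \<Rightarrow> real \<Rightarrow> bool" where
  "becomes f a t \<longleftrightarrow>
     (0 < t \<and> (\<exists>b. b \<noteq> a \<and> eventually (\<lambda>s. f s = b) (at_left t)) \<and> f t = a) \<or>
     (f t \<noteq> a \<and> eventually (\<lambda>s. f s = a) (at_right t))"

end

(*
  Between consecutive significant moments of a run the state is frozen, and in a frozen state
  SafeToOpen can only switch from true to false as CT grows, since each clause
  CT + d_open < Deadline(x) only gets harder. So SafeToOpen is eventually constant on either
  side of every moment, which gives discreteness.

  No rule of either module touches the deadline of a non-empty track whose deadline is finite,
  and the step at t leaves TrackStatus alone; so a track violating SafeToOpen at t still violates
  it just after t, which gives (2). Dually, internal functions do not jump when t is approached
  from the left, so if SafeToOpen becomes true at t, the track violating it just before t keeps its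
  due deadline at t and can only be excused by having become empty at t.
*)

theory Submission
  imports Defs
begin

lemma list_adjacent_change:
  assumes "xs \<noteq> []" "P (hd xs)" "\<not> P (last xs)"
  shows "\<exists>i. Suc i < length xs \<and> P (xs ! i) \<and> \<not> P (xs ! Suc i)"
  using assms
proof (induction xs)
  case (Cons a ys)
  show ?case
  proof (cases "ys \<noteq> [] \<and> P (hd ys)")
    case True
    then obtain i where "Suc i < length ys" "P (ys ! i)" "\<not> P (ys ! Suc i)"
      using Cons by auto
    then show ?thesis by (intro exI[of _ "Suc i"]) auto
  next
    case False
    then show ?thesis using Cons by (intro exI[of _ 0]) (cases ys; auto)
  qed
qed simp

lemma pre_run_eventually_const_at_right:
  assumes "pre_run R" "0 \<le> t"
  shows "\<exists>\<sigma>. eventually (\<lambda>s. R s = \<sigma>) (at_right t)"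
proof -
  obtain ts where ts: "ts \<noteq> []" "hd ts = 0" "last ts = t + 1"
    "\<forall>i. Suc i < length ts \<longrightarrow> (\<exists>\<sigma>. \<forall>s. ts ! i < s \<and> s < ts ! Suc i \<longrightarrow> R s = \<sigma>)"
    using assms unfolding pre_run_def by (metis add_nonneg_pos zero_less_one)
  obtain i where i: "Suc i < length ts" "ts ! i \<le> t" "t < ts ! Suc i"
    using list_adjacent_change[of ts "\<lambda>x. x \<le> t"] ts assms by auto
  obtain \<sigma> where "\<forall>s. ts ! i < s \<and> s < ts ! Suc i \<longrightarrow> R s = \<sigma>"
    using ts(4) i(1) by blast
  with i have "eventually (\<lambda>s. R s = \<sigma>) (at_right t)"
    unfolding eventually_at_right_field by (intro exI[of _ "ts ! Suc i"]) auto
  then show ?thesis ..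
qed

lemma pre_run_eventually_const_at_left:
  assumes "pre_run R" "0 < t"
  shows "\<exists>\<sigma>. eventually (\<lambda>s. R s = \<sigma>) (at_left t)"
proof -
  obtain ts where ts: "ts \<noteq> []" "hd ts = 0" "last ts = t"
    "\<forall>i. Suc i < length ts \<longrightarrow> (\<exists>\<sigma>. \<forall>s. ts ! i < s \<and> s < ts ! Suc i \<longrightarrow> R s = \<sigma>)"
    using assms unfolding pre_run_def by metis
  obtain i where i: "Suc i < length ts" "ts ! i < t" "t \<le> ts ! Suc i"
    using list_adjacent_change[of ts "\<lambda>x. x < t"] ts assms by auto
  obtain \<sigma> where "\<forall>s. ts ! i < s \<and> s < ts ! Suc i \<longrightarrow> R s = \<sigma>"
    using ts(4) i(1) by blast
  with i have "eventually (\<lambda>s. R s = \<sigma>) (at_left t)"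
    unfolding eventually_at_left_field by (intro exI[of _ "ts ! i"]) auto
  then show ?thesis ..
qed

lemma antimono_bool_eventually_const_at_right:
  fixes g :: "real \<Rightarrow> bool"
  assumes "antimono g"
  shows "\<exists>c. eventually (\<lambda>s. g s = c) (at_right a)"
proof (cases "\<exists>p>a. g p")
  case True
  then obtain p where "a < p" "g p" by blast
  with assms have "eventually (\<lambda>s. g s = True) (at_right a)"
    unfolding eventually_at_right_field
    by (intro exI[of _ p]) (metis antimonoD le_boolD less_imp_le)
  then show ?thesis ..
next
  case False
  then have "eventually (\<lambda>s. g s = False) (at_right a)"
    unfolding eventually_at_right_field by (intro exI[of _ "a + 1"]) auto
  then show ?thesis ..
qed

lemma antimono_bool_eventually_const_at_left:
  fixes g :: "real \<Rightarrow> bool"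
  assumes "antimono g"
  shows "\<exists>c. eventually (\<lambda>s. g s = c) (at_left a)"
proof (cases "\<exists>p<a. \<not> g p")
  case True
  then obtain p where "p < a" "\<not> g p" by blast
  with assms have "eventually (\<lambda>s. g s = False) (at_left a)"
    unfolding eventually_at_left_field
    by (intro exI[of _ p]) (metis antimonoD le_boolD less_imp_le)
  then show ?thesis ..
next
  case False
  then have "eventually (\<lambda>s. g s = True) (at_left a)"
    unfolding eventually_at_left_field by (intro exI[of _ "a - 1"]) auto
  then show ?thesis ..
qed

lemma not_significant_if_const_on_interval:
  assumes "a < s" "s < b" "\<And>y. a < y \<Longrightarrow> y < b \<Longrightarrow> f y = c"
  shows "\<not> significant f s"
proof
  assume "significant f s"
  moreover have "min (s - a) (b - s) > 0" using assms by simp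
  ultimately obtain y where "\<bar>y - s\<bar> < min (s - a) (b - s)" "f y \<noteq> f s"
    unfolding significant_def by blast
  with assms show False by (auto simp: abs_less_iff)
qed

lemma eventually_not_significant_at_right:
  assumes "eventually (\<lambda>s. f s = c) (at_right l)"
  shows "eventually (\<lambda>s. \<not> significant f s) (at_right l)"
proof -
  obtain b where "l < b" "\<forall>y>l. y < b \<longrightarrow> f y = c"
    using assms unfolding eventually_at_right_field by blast
  then show ?thesis unfolding eventually_at_right_field
    by (metis not_significant_if_const_on_interval)
qed

lemma eventually_not_significant_at_left:
  assumes "eventually (\<lambda>s. f s = c) (at_left l)"
  shows "eventually (\<lambda>s. \<not> significant f s) (at_left l)"
proof -
  obtain a where "a < l" "\<forall>y>a. y < l \<longrightarrow> f y = c"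
    using assms unfolding eventually_at_left_field by blast
  then show ?thesis unfolding eventually_at_left_field
    by (metis not_significant_if_const_on_interval)
qed

lemma discrete_termI:
  assumes right: "\<And>l. 0 \<le> l \<Longrightarrow> eventually (\<lambda>s. \<not> significant f s) (at_right l)"
    and left: "\<And>l. 0 < l \<Longrightarrow> eventually (\<lambda>s. \<not> significant f s) (at_left l)"
  shows "discrete_term f"
  unfolding discrete_term_def
proof (intro allI impI)
  fix l :: real
  assume "0 \<le> l"
  obtain b where b: "l < b" "\<forall>y>l. y < b \<longrightarrow> \<not> significant f y"
    using right[OF \<open>0 \<le> l\<close>] unfolding eventually_at_right_field by blast
  obtain a where a: "a < l" "\<forall>y>a. y < l \<longrightarrow> 0 \<le> y \<longrightarrow> \<not> significant f y"
  proof (cases "l = 0")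
    case True
    then show ?thesis by (intro that[of "-1"]) auto
  next
    case False
    with \<open>0 \<le> l\<close> show ?thesis
      using left[of l] that unfolding eventually_at_left_field by force
  qed
  show "\<exists>\<epsilon>>0. \<forall>s. 0 \<le> s \<and> significant f s \<and> \<bar>s - l\<bar> < \<epsilon> \<longrightarrow> s = l"
  proof (intro exI[of _ "min (b - l) (l - a)"] conjI allI impI)
    show "0 < min (b - l) (l - a)" using a b by simp
  next
    fix s
    assume s: "0 \<le> s \<and> significant f s \<and> \<bar>s - l\<bar> < min (b - l) (l - a)"
    then have "a < s" "s < b" by (auto simp: abs_less_iff)
    with a b s show "s = l" by (metis linorder_neqE_linordered_idom)
  qed
qed

lemma safe_to_open_antimono: "antimono (safe_to_open dopen \<sigma>)"
proof (intro antimonoI le_boolI)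
  fix s t :: real
  assume "s \<le> t" "safe_to_open dopen \<sigma> t"
  moreover have "ereal (s + dopen) \<le> ereal (t + dopen)" using \<open>s \<le> t\<close> by simp
  ultimately show "safe_to_open dopen \<sigma> s"
    unfolding safe_to_open_def using le_less_trans by blast
qed

lemma safe_to_open_eventually_const_at_right:
  assumes "pre_run R" "0 \<le> t"
  shows "\<exists>c. eventually (\<lambda>s. safe_to_open dopen (R s) s = c) (at_right t)"
proof -
  obtain \<sigma> where \<sigma>: "eventually (\<lambda>s. R s = \<sigma>) (at_right t)"
    using pre_run_eventually_const_at_right[OF assms] ..
  obtain c where "eventually (\<lambda>s. safe_to_open dopen \<sigma> s = c) (at_right t)"
    using antimono_bool_eventually_const_at_right[OF safe_to_open_antimono] ..
  with \<sigma> have "eventually (\<lambda>s. safe_to_open dopen (R s) s = c) (at_right t)"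
    by eventually_elim simp
  then show ?thesis ..
qed

lemma safe_to_open_eventually_const_at_left:
  assumes "pre_run R" "0 < t"
  shows "\<exists>c. eventually (\<lambda>s. safe_to_open dopen (R s) s = c) (at_left t)"
proof -
  obtain \<sigma> where \<sigma>: "eventually (\<lambda>s. R s = \<sigma>) (at_left t)"
    using pre_run_eventually_const_at_left[OF assms] ..
  obtain c where "eventually (\<lambda>s. safe_to_open dopen \<sigma> s = c) (at_left t)"
    using antimono_bool_eventually_const_at_left[OF safe_to_open_antimono] ..
  with \<sigma> have "eventually (\<lambda>s. safe_to_open dopen (R s) s = c) (at_left t)"
    by eventually_elim simp
  then show ?thesis ..
qed

lemma pre_run_discrete_safe_to_open:
  assumes "pre_run R"
  shows "discrete_term (\<lambda>s. safe_to_open dopen (R s) s)"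
proof (rule discrete_termI)
  fix l :: real
  assume "0 \<le> l"
  then obtain c where "eventually (\<lambda>s. safe_to_open dopen (R s) s = c) (at_right l)"
    using safe_to_open_eventually_const_at_right[OF assms] by blast
  then show "eventually (\<lambda>s. \<not> significant (\<lambda>s. safe_to_open dopen (R s) s) s) (at_right l)"
    by (rule eventually_not_significant_at_right)
next
  fix l :: real
  assume "0 < l"
  then obtain c where "eventually (\<lambda>s. safe_to_open dopen (R s) s = c) (at_left l)"
    using safe_to_open_eventually_const_at_left[OF assms] by blast
  then show "eventually (\<lambda>s. \<not> significant (\<lambda>s. safe_to_open dopen (R s) s) s) (at_left l)"
    by (rule eventually_not_significant_at_left)
qed

lemma exec_agents_no_agents: "exec_agents dclose dopen dmin {} \<sigma> t = \<sigma>"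
  by (simp add: exec_agents_def apply_upd_def)

lemma Deadline_exec_agents_pending:
  assumes "TrackStatus \<sigma> x \<noteq> Empty" "Deadline \<sigma> x \<noteq> \<infinity>"
  shows "Deadline (exec_agents dclose dopen dmin M \<sigma> t) x = Deadline \<sigma> x"
proof -
  have "UDeadline x v \<notin> module_updates dclose dopen dmin A \<sigma> t" for A v
    using assms by (cases A)
      (auto simp: module_updates_def gate_updates_def controller_updates_def)
  then show ?thesis by (auto simp: exec_agents_def apply_upd_def)
qed

lemma run_right_limit_step:
  assumes "is_run dclose dopen dmin R" "0 \<le> t" "eventually (\<lambda>s. R s = \<sigma>) (at_right t)"
  shows "\<exists>M. \<sigma> = exec_agents dclose dopen dmin M (R t) t \<and> TrackStatus \<sigma> = TrackStatus (R t)"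
proof (cases "\<sigma> = R t")
  case True
  then show ?thesis by (intro exI[of _ "{}"]) (simp add: exec_agents_no_agents)
next
  case False
  with assms show ?thesis unfolding is_run_def by blast
qed

lemma run_left_limit_Deadline:
  assumes "is_run dclose dopen dmin R" "0 < t" "eventually (\<lambda>s. R s = \<sigma>) (at_left t)"
  shows "Deadline \<sigma> = Deadline (R t)"
  using assms unfolding is_run_def by blast

lemma run_safe_to_open_from_right:
  assumes run: "is_run dclose dopen dmin R" and "0 \<le> t"
    and safe: "eventually (\<lambda>s. safe_to_open dopen (R s) s) (at_right t)"
  shows "safe_to_open dopen (R t) t"
proof (rule ccontr)
  assume "\<not> safe_to_open dopen (R t) t"
  then obtain x where x: "TrackStatus (R t) x \<noteq> Empty" "Deadline (R t) x \<le> ereal (t + dopen)"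
    unfolding safe_to_open_def by (auto simp: not_less)
  obtain \<sigma> where \<sigma>: "eventually (\<lambda>s. R s = \<sigma>) (at_right t)"
    using pre_run_eventually_const_at_right run \<open>0 \<le> t\<close> unfolding is_run_def by blast
  then obtain M where "\<sigma> = exec_agents dclose dopen dmin M (R t) t"
      "TrackStatus \<sigma> = TrackStatus (R t)"
    using run_right_limit_step[OF run \<open>0 \<le> t\<close>] by blast
  moreover have "Deadline (R t) x \<noteq> \<infinity>" using x(2) by auto
  ultimately have pending: "TrackStatus \<sigma> x \<noteq> Empty" "Deadline \<sigma> x \<le> ereal (t + dopen)"
    using x Deadline_exec_agents_pending[of "R t" x] by auto
  have "eventually (\<lambda>s. False) (at_right t)"
    using safe \<sigma> eventually_at_right_less[of t]
  proof eventually_elim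
    case (elim s)
    then have "ereal (s + dopen) < Deadline \<sigma> x"
      using pending(1) unfolding safe_to_open_def by auto
    moreover have "ereal (t + dopen) < ereal (s + dopen)" using \<open>t < s\<close> by simp
    ultimately show False using pending(2) by (meson le_less_trans less_trans less_irrefl)
  qed
  then show False by simp
qed

lemma run_safe_to_open_becomes_True:
  assumes run: "is_run dclose dopen dmin R" and "0 \<le> t"
    and "becomes (\<lambda>s. safe_to_open dopen (R s) s) True t"
  shows "\<exists>x. becomes (\<lambda>s. TrackStatus (R s) x) Empty t"
proof -
  have "0 < t" and unsafe: "eventually (\<lambda>s. \<not> safe_to_open dopen (R s) s) (at_left t)"
    and safe: "safe_to_open dopen (R t) t"
    using assms run_safe_to_open_from_right[OF run \<open>0 \<le> t\<close>] unfolding becomes_def by auto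
  obtain \<sigma> where \<sigma>: "eventually (\<lambda>s. R s = \<sigma>) (at_left t)"
    using pre_run_eventually_const_at_left run \<open>0 < t\<close> unfolding is_run_def by blast
  have "eventually (\<lambda>s. s \<in> {t - 1<..<t}) (at_left t)"
    by (rule eventually_at_left_real) simp
  with unsafe \<sigma> have "eventually (\<lambda>s. s < t \<and> \<not> safe_to_open dopen \<sigma> s) (at_left t)"
    by eventually_elim auto
  then obtain s where "s < t" "\<not> safe_to_open dopen \<sigma> s"
    using eventually_happens'[OF trivial_limit_at_left_real] by blast
  then obtain x where x: "TrackStatus \<sigma> x \<noteq> Empty" "Deadline \<sigma> x \<le> ereal (s + dopen)"
    unfolding safe_to_open_def by (auto simp: not_less)
  have "Deadline (R t) x \<le> ereal (t + dopen)"
    using x(2) \<open>s < t\<close> run_left_limit_Deadline[OF run \<open>0 < t\<close> \<sigma>] by (simp add: order_trans)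
  with safe have "TrackStatus (R t) x = Empty"
    unfolding safe_to_open_def by (meson not_less)
  with x(1) \<sigma> \<open>0 < t\<close> have "becomes (\<lambda>s. TrackStatus (R s) x) Empty t"
    unfolding becomes_def by (auto elim: eventually_mono)
  then show ?thesis ..
qed

theorem mainTheorem6:
  fixes R :: "real \<Rightarrow> ('tr::finite) rstate"
    and dclose dopen dmin dmax :: real
  assumes "0 < dclose" and "0 < dopen" and "dclose < dmin" and "dmin \<le> dmax"
    and "regular_run dclose dopen dmin dmax R"
  shows "discrete_term (\<lambda>s. safe_to_open dopen (R s) s)
    \<and> (\<forall>t\<ge>0. eventually (\<lambda>s. safe_to_open dopen (R s) s) (at_right t)
               \<longrightarrow> safe_to_open dopen (R t) t)
    \<and> (\<forall>t\<ge>0. becomes (\<lambda>s. safe_to_open dopen (R s) s) True t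
               \<longrightarrow> (\<exists>x. becomes (\<lambda>s. TrackStatus (R s) x) Empty t))"
proof -
  have run: "is_run dclose dopen dmin R"
    using assms(5) unfolding regular_run_def by blast
  then have "pre_run R" unfolding is_run_def by blast
  then show ?thesis
    using pre_run_discrete_safe_to_open run_safe_to_open_from_right[OF run]
      run_safe_to_open_becomes_True[OF run]
    by blast
qed

end
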